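(* Let $f\colon[a,b]\to\mathbb{R}$ be Laplace integrable on $[a,b]$ and have the intermediate value (Darboux) property on $[a,b]$. Let $g\colon[a,b]\to\mathbb{R}$ be Laplace integrable on $[a,b]$ and non-negative, and suppose $fg$ is Laplace integrable on $[a,b]$. Then there is $\xi\in[a,b]$ with $\int_a^bfg=f(\xi)\int_a^bg$. In particular, $\int_a^bf=f(\xi)(b-a)$ for some $\xi\in[a,b]$.
   Context: Laplace integral on $[a,b]$: with lower/upper Laplace derivates $\underline{LD}_1F(x)$, $\overline{LD}_1F(x)$ being the minimum of the $\liminf$'s, resp. maximum of the $\limsup$'s, as $s\to\infty$ of $s^2\int_0^\delta e^{-st}[F(x+t)-F(x)]dt$ and $(-s^2)\int_0^\delta e^{-st}[F(x-t)-F(x)]dt$ (one-sided at endpoints), a major function of $f$ is a continuous $U$ with $\underline{LD}_1U\geqslant f$, $\underline{LD}_1U>-\infty$ everywhere on $[a,b]$, a minor function a continuous $V$ with $\overline{LD}_1V\leqslant f$, $\overline{LD}_1V<\infty$ everywhere, and $f$ is Laplace integrable if $\sup_V(V(b)-V(a))=\inf_U(U(b)-U(a))$ is finite, this value being $\int_a^bf$. *)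

theory Defs
  imports "HOL-Analysis.Analysis"
begin

definition lap_right :: "(real \<Rightarrow> real) \<Rightarrow> real \<Rightarrow> real \<Rightarrow> real \<Rightarrow> real" where
  "lap_right F x \<delta> s = s\<^sup>2 * integral {0..\<delta>} (\<lambda>t. exp (- s * t) * (F (x + t) - F x))"

definition lap_left :: "(real \<Rightarrow> real) \<Rightarrow> real \<Rightarrow> real \<Rightarrow> real \<Rightarrow> real" where
  "lap_left F x \<delta> s = - (s\<^sup>2) * integral {0..\<delta>} (\<lambda>t. exp (- s * t) * (F (x - t) - F x))"

definition lower_LD :: "real \<Rightarrow> real \<Rightarrow> (real \<Rightarrow> real) \<Rightarrow> real \<Rightarrow> ereal" where
  "lower_LD a b F x =
     (if x = a then Liminf at_top (\<lambda>s. ereal (lap_right F x (b - x) s))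
      else if x = b then Liminf at_top (\<lambda>s. ereal (lap_left F x (x - a) s))
      else min (Liminf at_top (\<lambda>s. ereal (lap_right F x (b - x) s)))
               (Liminf at_top (\<lambda>s. ereal (lap_left F x (x - a) s))))"

definition upper_LD :: "real \<Rightarrow> real \<Rightarrow> (real \<Rightarrow> real) \<Rightarrow> real \<Rightarrow> ereal" where
  "upper_LD a b F x =
     (if x = a then Limsup at_top (\<lambda>s. ereal (lap_right F x (b - x) s))
      else if x = b then Limsup at_top (\<lambda>s. ereal (lap_left F x (x - a) s))
      else max (Limsup at_top (\<lambda>s. ereal (lap_right F x (b - x) s)))
               (Limsup at_top (\<lambda>s. ereal (lap_left F x (x - a) s))))"

definition laplace_major :: "real \<Rightarrow> real \<Rightarrow> (real \<Rightarrow> real) \<Rightarrow> (real \<Rightarrow> real) \<Rightarrow> bool" where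
  "laplace_major a b f U \<longleftrightarrow> continuous_on {a..b} U \<and>
     (\<forall>x\<in>{a..b}. lower_LD a b U x \<ge> ereal (f x) \<and> lower_LD a b U x > -\<infinity>)"

definition laplace_minor :: "real \<Rightarrow> real \<Rightarrow> (real \<Rightarrow> real) \<Rightarrow> (real \<Rightarrow> real) \<Rightarrow> bool" where
  "laplace_minor a b f V \<longleftrightarrow> continuous_on {a..b} V \<and>
     (\<forall>x\<in>{a..b}. upper_LD a b V x \<le> ereal (f x) \<and> upper_LD a b V x < \<infinity>)"

definition laplace_lower_int :: "real \<Rightarrow> real \<Rightarrow> (real \<Rightarrow> real) \<Rightarrow> ereal" where
  "laplace_lower_int a b f = (SUP V\<in>{V. laplace_minor a b f V}. ereal (V b - V a))"

definition laplace_upper_int :: "real \<Rightarrow> real \<Rightarrow> (real \<Rightarrow> real) \<Rightarrow> ereal" where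
  "laplace_upper_int a b f = (INF U\<in>{U. laplace_major a b f U}. ereal (U b - U a))"

definition laplace_integrable :: "real \<Rightarrow> real \<Rightarrow> (real \<Rightarrow> real) \<Rightarrow> bool" where
  "laplace_integrable a b f \<longleftrightarrow>
     laplace_lower_int a b f = laplace_upper_int a b f \<and> \<bar>laplace_upper_int a b f\<bar> \<noteq> \<infinity>"

definition laplace_integral :: "real \<Rightarrow> real \<Rightarrow> (real \<Rightarrow> real) \<Rightarrow> real" where
  "laplace_integral a b f = real_of_ereal (laplace_upper_int a b f)"

definition darboux_on :: "real set \<Rightarrow> (real \<Rightarrow> real) \<Rightarrow> bool" where
  "darboux_on S f \<longleftrightarrow> (\<forall>x\<in>S. \<forall>y\<in>S. \<forall>c. x \<le> y \<and> min (f x) (f y) \<le> c \<and> c \<le> max (f x) (f y)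
      \<longrightarrow> (\<exists>z\<in>{x..y}. f z = c))"

end

theory Submission
  imports Defs "HOL-Real_Asymp.Real_Asymp"
begin

text \<open>
  Only the right-hand Laplace expressions at points of [a,b) are needed. The basic tool is a
  monotonicity theorem: a continuous P whose lower right Laplace derivate is >= 0 on [a,b) is
  nondecreasing. After tilting P by e x the derivate is positive, whereas at a point where P
  attains its maximum over some [x, x + tau] the Laplace expression is at most s^2 exp(-s tau)
  times a constant, which tends to 0. Consequently minor functions increase no more than major
  functions, integrals of nonnegative functions are nonnegative, and the identity, being both a
  major and a minor function of 1, shows that 1 has integral b - a.

  Call h >= 0 null if there are continuous U with right Laplace derivate >= h and arbitrarily
  small increment. A series of such U gives a nondecreasing Phi with increment at most eta and
  infinite right Laplace derivate wherever h > 0; adding Phi to a major or minor function shows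
  that every integrable k vanishing wherever h vanishes has integral 0.

  For the mean value theorem let c = (int f g) / (int g); if int g = 0, then g itself is null and
  int f g = 0. If f > c on all of [a,b], then h = (f - c) g = f g - c g is null since
  int f g - c int g = 0, and g vanishes wherever h does, so int g = 0; likewise if f < c.
  Hence f takes values <= c and >= c, and the Darboux property yields xi with f xi = c.
  The second claim is the case g = 1.
\<close>

lemma lap_right_integrable:
  fixes F :: "real \<Rightarrow> real"
  assumes "continuous_on {a..b} F" "x \<in> {a..b}"
  shows "(\<lambda>t. exp (- s * t) * (F (x + t) - F x)) integrable_on {0..b - x}"
proof (rule integrable_continuous_interval)
  have "continuous_on {0..b - x} (\<lambda>t. x + t)"
    by (intro continuous_intros)
  moreover have "(\<lambda>t. x + t) ` {0..b - x} \<subseteq> {a..b}"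
    using assms(2) by auto
  ultimately have "continuous_on {0..b - x} (\<lambda>t. F (x + t))"
    by (rule continuous_on_compose2[OF assms(1)])
  then show "continuous_on {0..b - x} (\<lambda>t. exp (- s * t) * (F (x + t) - F x))"
    by (intro continuous_intros)
qed

lemma lap_right_add:
  assumes "continuous_on {a..b} F" "continuous_on {a..b} G" "x \<in> {a..b}"
  shows "lap_right (\<lambda>y. F y + G y) x (b - x) s = lap_right F x (b - x) s + lap_right G x (b - x) s"
  using integral_add[OF lap_right_integrable[OF assms(1,3), of s] lap_right_integrable[OF assms(2,3), of s]]
  unfolding lap_right_def by (simp add: algebra_simps)

lemma lap_right_cmult: "lap_right (\<lambda>y. c * F y) x d s = c * lap_right F x d s"
  unfolding lap_right_def by (simp add: algebra_simps flip: integral_mult_right)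

lemma lap_right_minus: "lap_right (\<lambda>y. - F y) x d s = - lap_right F x d s"
  using lap_right_cmult[of "-1" F x d s] by simp

lemma lap_right_mono:
  assumes "continuous_on {a..b} F" "continuous_on {a..b} G" "x \<in> {a..b}"
    and "\<And>t. t \<in> {0..b - x} \<Longrightarrow> G (x + t) - G x \<le> F (x + t) - F x"
  shows "lap_right G x (b - x) s \<le> lap_right F x (b - x) s"
proof -
  have "integral {0..b - x} (\<lambda>t. exp (- s * t) * (G (x + t) - G x))
      \<le> integral {0..b - x} (\<lambda>t. exp (- s * t) * (F (x + t) - F x))"
    using assms(4)
    by (intro integral_le lap_right_integrable[OF assms(2,3)] lap_right_integrable[OF assms(1,3)]
        mult_left_mono) auto
  then show ?thesis
    unfolding lap_right_def by (rule mult_left_mono) simp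
qed

lemma integral_exp_times_id:
  fixes s d :: real
  assumes "s > 0" "d \<ge> 0"
  shows "integral {0..d} (\<lambda>t. exp (- s * t) * t) = (1 - exp (- s * d) * (1 + s * d)) / s\<^sup>2"
proof -
  define A where "A t = - (exp (- s * t) * (1 + s * t)) / s\<^sup>2" for t
  have "(A has_real_derivative exp (- s * t) * t) (at t within {0..d})" for t
    unfolding A_def
    by (rule derivative_eq_intros refl | use assms in \<open>simp add: field_simps power2_eq_square\<close>)+
  then have "((\<lambda>t. exp (- s * t) * t) has_integral A d - A 0) {0..d}"
    by (intro fundamental_theorem_of_calculus assms(2))
       (simp add: has_real_derivative_iff_has_vector_derivative)
  then show ?thesis
    using assms(1) by (simp add: integral_unique A_def field_simps)
qed

lemma lap_right_id_tendsto:
  assumes "d > 0"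
  shows "((\<lambda>s. lap_right (\<lambda>y. y) x d s) \<longlongrightarrow> 1) at_top"
proof (rule Lim_transform_eventually)
  show "((\<lambda>s. 1 - exp (- s * d) * (1 + s * d)) \<longlongrightarrow> 1) at_top"
    using assms by real_asymp
  show "\<forall>\<^sub>F s in at_top. 1 - exp (- s * d) * (1 + s * d) = lap_right (\<lambda>y. y) x d s"
    using eventually_gt_at_top[of 0]
    by eventually_elim (use assms integral_exp_times_id in \<open>simp add: lap_right_def\<close>)
qed

lemma lap_left_id: "lap_left (\<lambda>y. y) x d s = lap_right (\<lambda>y. y) x d s"
  unfolding lap_left_def lap_right_def by simp

definition lap_right_liminf_ge :: "real \<Rightarrow> (real \<Rightarrow> real) \<Rightarrow> real \<Rightarrow> real \<Rightarrow> bool" where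
  "lap_right_liminf_ge b F x p \<longleftrightarrow> ereal p \<le> Liminf at_top (\<lambda>s. ereal (lap_right F x (b - x) s))"

lemma lap_right_liminf_ge_iff:
  "lap_right_liminf_ge b F x p \<longleftrightarrow> (\<forall>q<p. \<forall>\<^sub>F s in at_top. q < lap_right F x (b - x) s)"
  unfolding lap_right_liminf_ge_def le_Liminf_iff
proof safe
  fix y :: ereal
  assume "\<forall>q<p. \<forall>\<^sub>F s in at_top. q < lap_right F x (b - x) s" "y < ereal p"
  then show "\<forall>\<^sub>F s in at_top. y < ereal (lap_right F x (b - x) s)"
    by (cases y) auto
next
  fix q
  assume "\<forall>y<ereal p. \<forall>\<^sub>F s in at_top. y < ereal (lap_right F x (b - x) s)" "q < p"
  then show "\<forall>\<^sub>F s in at_top. q < lap_right F x (b - x) s"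
    by (metis (no_types, lifting) eventually_mono less_ereal.simps(1))
qed

lemma lap_right_liminf_ge_mono: "lap_right_liminf_ge b F x p \<Longrightarrow> q \<le> p \<Longrightarrow> lap_right_liminf_ge b F x q"
  unfolding lap_right_liminf_ge_def by (meson ereal_less_eq(3) order_trans)

lemma lap_right_liminf_ge_add:
  assumes "continuous_on {a..b} F" "continuous_on {a..b} G" "x \<in> {a..b}"
    and "lap_right_liminf_ge b F x p" "lap_right_liminf_ge b G x q"
  shows "lap_right_liminf_ge b (\<lambda>y. F y + G y) x (p + q)"
  unfolding lap_right_liminf_ge_iff
proof (intro allI impI)
  fix r assume "r < p + q"
  define e where "e = (p + q - r) / 2"
  have "e > 0"
    using \<open>r < p + q\<close> by (simp add: e_def)
  then have "\<forall>\<^sub>F s in at_top. p - e < lap_right F x (b - x) s"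
    and "\<forall>\<^sub>F s in at_top. q - e < lap_right G x (b - x) s"
    using assms(4,5) unfolding lap_right_liminf_ge_iff by auto
  then show "\<forall>\<^sub>F s in at_top. r < lap_right (\<lambda>y. F y + G y) x (b - x) s"
  proof eventually_elim
    case (elim s)
    then have "r < lap_right F x (b - x) s + lap_right G x (b - x) s"
      by (simp add: e_def field_simps)
    then show ?case
      by (simp add: lap_right_add[OF assms(1-3)])
  qed
qed

lemma lap_right_liminf_ge_cmult:
  assumes "c \<ge> 0" "lap_right_liminf_ge b F x p"
  shows "lap_right_liminf_ge b (\<lambda>y. c * F y) x (c * p)"
  unfolding lap_right_liminf_ge_iff lap_right_cmult
proof (intro allI impI)
  fix q assume q: "q < c * p"
  show "\<forall>\<^sub>F s in at_top. q < c * lap_right F x (b - x) s"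
  proof (cases "c = 0")
    case False
    with assms(1) q have "c > 0" "q / c < p" by (auto simp: field_simps)
    then have "\<forall>\<^sub>F s in at_top. q / c < lap_right F x (b - x) s"
      using assms(2) unfolding lap_right_liminf_ge_iff by blast
    then show ?thesis
      by eventually_elim (use \<open>c > 0\<close> in \<open>simp add: field_simps\<close>)
  qed (use q in simp)
qed

lemma Liminf_Limsup_lap_right_id:
  assumes "d > 0"
  shows "Liminf at_top (\<lambda>s. ereal (lap_right (\<lambda>y. y) x d s)) = 1"
    and "Limsup at_top (\<lambda>s. ereal (lap_right (\<lambda>y. y) x d s)) = 1"
proof -
  have lim: "((\<lambda>s. ereal (lap_right (\<lambda>y. y) x d s)) \<longlongrightarrow> ereal 1) at_top"
    using lap_right_id_tendsto[OF assms] by (simp only: lim_ereal)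
  show "Liminf at_top (\<lambda>s. ereal (lap_right (\<lambda>y. y) x d s)) = 1"
    using lim_imp_Liminf[OF trivial_limit_at_top_linorder lim] by simp
  show "Limsup at_top (\<lambda>s. ereal (lap_right (\<lambda>y. y) x d s)) = 1"
    using lim_imp_Limsup[OF trivial_limit_at_top_linorder lim] by simp
qed

lemma lap_right_liminf_ge_id: "x < b \<Longrightarrow> lap_right_liminf_ge b (\<lambda>y. y) x 1"
  unfolding lap_right_liminf_ge_def by (simp add: Liminf_Limsup_lap_right_id)

lemma mono_on_imp_lap_right_liminf_ge_0:
  assumes "continuous_on {a..b} F" "mono_on {a..b} F" "x \<in> {a..b}"
  shows "lap_right_liminf_ge b F x 0"
proof -
  have "lap_right (\<lambda>y. 0) x (b - x) s \<le> lap_right F x (b - x) s" for s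
    using assms by (intro lap_right_mono[OF assms(1) continuous_on_const assms(3)]) (auto elim!: mono_onD)
  then have "0 \<le> lap_right F x (b - x) s" for s
    by (simp add: lap_right_def)
  then show ?thesis
    unfolding lap_right_liminf_ge_iff by (auto intro: always_eventually less_le_trans)
qed

lemma lap_right_liminf_ge_sum:
  assumes "finite A" "\<And>j. j \<in> A \<Longrightarrow> continuous_on {a..b} (F j)" "x \<in> {a..b}"
    and "\<And>j. j \<in> A \<Longrightarrow> lap_right_liminf_ge b (F j) x (p j)"
  shows "lap_right_liminf_ge b (\<lambda>y. \<Sum>j\<in>A. F j y) x (\<Sum>j\<in>A. p j)"
  using assms
proof (induction A rule: finite_induct)
  case empty
  then show ?case
    by (simp add: lap_right_liminf_ge_def lap_right_def Liminf_const)
next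
  case (insert i A)
  have "continuous_on {a..b} (\<lambda>y. \<Sum>j\<in>A. F j y)"
    using insert.prems by (intro continuous_on_sum) auto
  then have "lap_right_liminf_ge b (\<lambda>y. F i y + (\<Sum>j\<in>A. F j y)) x (p i + (\<Sum>j\<in>A. p j))"
    using insert by (intro lap_right_liminf_ge_add[of a b]) auto
  then show ?case
    using insert.hyps by simp
qed

lemma lap_right_liminf_ge_le_trans:
  assumes "\<And>s. lap_right G x (b - x) s \<le> lap_right F x (b - x) s" "lap_right_liminf_ge b G x p"
  shows "lap_right_liminf_ge b F x p"
proof -
  have "Liminf at_top (\<lambda>s. ereal (lap_right G x (b - x) s))
      \<le> Liminf at_top (\<lambda>s. ereal (lap_right F x (b - x) s))"
    using assms(1) by (intro Liminf_mono always_eventually) simp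
  then show ?thesis
    using assms(2) unfolding lap_right_liminf_ge_def by (rule order_trans[rotated])
qed

section \<open>Monotonicity from right Laplace derivates\<close>

text \<open>Near a right-hand maximum the integrand is <= 0, so only the damped tail beyond tau counts.\<close>

lemma lap_right_le_at_right_max:
  assumes cont: "continuous_on {a..b} P" and x: "x \<in> {a..b}" and \<tau>: "0 < \<tau>" "\<tau> \<le> b - x"
    and max: "\<forall>t\<in>{0..\<tau>}. P (x + t) \<le> P x"
    and bound: "\<forall>y\<in>{a..b}. \<bar>P y\<bar> \<le> B" and s: "s > 0"
  shows "lap_right P x (b - x) s \<le> s\<^sup>2 * exp (- s * \<tau>) * (2 * B * (b - x))"
proof -
  define g where "g t = exp (- s * t) * (P (x + t) - P x)" for t
  have int: "g integrable_on {0..b - x}"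
    unfolding g_def by (rule lap_right_integrable[OF cont x])
  have "integral {0..\<tau>} g \<le> integral {0..\<tau>} (\<lambda>t. 0)"
    using max \<tau> by (intro integral_le integrable_on_subinterval[OF int] integrable_0)
      (auto simp: g_def mult_nonneg_nonpos)
  then have near: "integral {0..\<tau>} g \<le> 0"
    by simp
  have "0 \<le> B"
    using bound x by force
  have "g t \<le> exp (- s * \<tau>) * (2 * B)" if t: "t \<in> {\<tau>..b - x}" for t
  proof -
    have "x + t \<in> {a..b}"
      using x t \<tau> by auto
    then have "P (x + t) \<le> B" "- P x \<le> B"
      using bound x by (auto simp: abs_le_iff)
    then have "P (x + t) - P x \<le> 2 * B"
      by linarith
    then have "g t \<le> exp (- s * t) * (2 * B)"
      unfolding g_def by (rule mult_left_mono) simp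
    also have "\<dots> \<le> exp (- s * \<tau>) * (2 * B)"
      using s t \<open>0 \<le> B\<close> by (intro mult_right_mono) auto
    finally show ?thesis .
  qed
  then have "integral {\<tau>..b - x} g \<le> (b - x - \<tau>) * (exp (- s * \<tau>) * (2 * B))"
    using integral_le[OF integrable_on_subinterval[OF int] integrable_const_ivl, of \<tau> "b - x"] \<tau> by simp
  also have "\<dots> \<le> (b - x) * (exp (- s * \<tau>) * (2 * B))"
    using \<open>0 \<le> B\<close> \<tau> by (intro mult_right_mono) auto
  finally have far: "integral {\<tau>..b - x} g \<le> (b - x) * (exp (- s * \<tau>) * (2 * B))" .
  have "integral {0..b - x} g \<le> (b - x) * (exp (- s * \<tau>) * (2 * B))"
    using near far Henstock_Kurzweil_Integration.integral_combine[OF _ \<tau>(2) int] \<tau>(1) by simp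
  then have "s\<^sup>2 * integral {0..b - x} g \<le> s\<^sup>2 * ((b - x) * (exp (- s * \<tau>) * (2 * B)))"
    by (rule mult_left_mono) simp
  then show ?thesis
    unfolding lap_right_def g_def[symmetric] by (simp add: algebra_simps)
qed

lemma not_lap_right_liminf_pos_at_right_max:
  assumes cont: "continuous_on {a..b} P" and x: "x \<in> {a..b}" and \<tau>: "0 < \<tau>" "\<tau> \<le> b - x"
    and max: "\<forall>t\<in>{0..\<tau>}. P (x + t) \<le> P x" and q: "q > 0"
  shows "\<not> lap_right_liminf_ge b P x q"
proof
  assume "lap_right_liminf_ge b P x q"
  moreover have "q / 2 < q"
    using q by simp
  ultimately have large: "\<forall>\<^sub>F s in at_top. q / 2 < lap_right P x (b - x) s"
    unfolding lap_right_liminf_ge_iff by blast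
  obtain B where B: "\<forall>y\<in>{a..b}. \<bar>P y\<bar> \<le> B"
    using compact_imp_bounded[OF compact_continuous_image[OF cont compact_Icc]]
    unfolding bounded_iff by auto
  have "((\<lambda>s. s\<^sup>2 * exp (- s * \<tau>) * (2 * B * (b - x))) \<longlongrightarrow> 0) at_top"
    using \<tau>(1) by real_asymp
  then have small: "\<forall>\<^sub>F s in at_top. s\<^sup>2 * exp (- s * \<tau>) * (2 * B * (b - x)) < q / 2"
    using q by (intro order_tendstoD(2)) auto
  obtain s where "q / 2 < lap_right P x (b - x) s"
    and "s\<^sup>2 * exp (- s * \<tau>) * (2 * B * (b - x)) < q / 2" and "s > 0"
    using eventually_happens'[OF _ eventually_conj[OF large eventually_conj[OF small eventually_gt_at_top]]]
    by auto
  then show False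
    using lap_right_le_at_right_max[OF cont x \<tau> max B] by fastforce
qed

lemma lap_right_liminf_pos_imp_mono_on:
  assumes cont: "continuous_on {a..b} P"
    and pos: "\<forall>x\<in>{a..<b}. \<exists>q>0. lap_right_liminf_ge b P x q"
  shows "mono_on {a..b} P"
proof (rule mono_onI, rule ccontr)
  fix c d
  assume cd: "c \<in> {a..b}" "d \<in> {a..b}" "c \<le> d" and "\<not> P c \<le> P d"
  obtain x where x: "x \<in> {c..d}" and max: "\<forall>y\<in>{c..d}. P y \<le> P x"
    using continuous_attains_sup[of "{c..d}" P] continuous_on_subset[OF cont] cd by auto
  have "P d < P x"
    using max cd \<open>\<not> P c \<le> P d\<close> by force
  then have "x \<noteq> d"
    by auto
  then have "x < d" "x \<in> {a..<b}"
    using x cd by auto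
  then obtain q where "q > 0" "lap_right_liminf_ge b P x q"
    using pos by blast
  moreover have "\<forall>t\<in>{0..d - x}. P (x + t) \<le> P x"
    using max x by auto
  ultimately show False
    using not_lap_right_liminf_pos_at_right_max[OF cont, of x "d - x"] \<open>x < d\<close> x cd by auto
qed

lemma lap_right_liminf_nonneg_imp_mono_on:
  assumes cont: "continuous_on {a..b} P"
    and nonneg: "\<forall>x\<in>{a..<b}. lap_right_liminf_ge b P x 0"
  shows "mono_on {a..b} P"
proof -
  have tilted: "mono_on {a..b} (\<lambda>y. P y + e * y)" if "e > 0" for e
  proof (rule lap_right_liminf_pos_imp_mono_on)
    show "continuous_on {a..b} (\<lambda>y. P y + e * y)"
      by (intro continuous_intros cont)
    have "lap_right_liminf_ge b (\<lambda>y. P y + e * y) x (0 + e * 1)" if "x \<in> {a..<b}" for x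
      using that nonneg \<open>e > 0\<close>
      by (intro lap_right_liminf_ge_add[OF cont] lap_right_liminf_ge_cmult lap_right_liminf_ge_id)
        (auto intro!: continuous_intros)
    then show "\<forall>x\<in>{a..<b}. \<exists>q>0. lap_right_liminf_ge b (\<lambda>y. P y + e * y) x q"
      using \<open>e > 0\<close> by force
  qed
  show ?thesis
  proof (rule mono_onI)
    fix c d assume cd: "c \<in> {a..b}" "d \<in> {a..b}" "c \<le> d"
    have "P c \<le> P d + e" if "e > 0" for e
    proof -
      define e' where "e' = e / (d - c + 1)"
      have "e' > 0" "e' * (d - c) \<le> e"
        using that cd by (auto simp: e'_def field_simps)
      moreover have "P c + e' * c \<le> P d + e' * d"
        using mono_onD[OF tilted[OF \<open>e' > 0\<close>] cd] .
      ultimately show ?thesis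
        by (simp add: algebra_simps)
    qed
    then show "P c \<le> P d"
      by (rule field_le_epsilon)
  qed
qed

section \<open>Major and minor functions\<close>

lemma laplace_major_lap_right_liminf_ge:
  assumes "laplace_major a b f U" "x \<in> {a..<b}"
  shows "lap_right_liminf_ge b U x (f x)"
proof -
  have "ereal (f x) \<le> lower_LD a b U x"
    using assms unfolding laplace_major_def by auto
  also have "\<dots> \<le> Liminf at_top (\<lambda>s. ereal (lap_right U x (b - x) s))"
    using assms(2) unfolding lower_LD_def by (auto simp: min.coboundedI1)
  finally show ?thesis
    unfolding lap_right_liminf_ge_def .
qed

lemma laplace_minor_lap_right_liminf_ge:
  assumes "laplace_minor a b f V" "x \<in> {a..<b}"
  shows "lap_right_liminf_ge b (\<lambda>y. - V y) x (- f x)"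
proof -
  have "Limsup at_top (\<lambda>s. ereal (lap_right V x (b - x) s)) \<le> upper_LD a b V x"
    using assms(2) unfolding upper_LD_def by (auto simp: max.coboundedI1)
  also have "\<dots> \<le> ereal (f x)"
    using assms unfolding laplace_minor_def by auto
  finally have "- ereal (f x) \<le> - Limsup at_top (\<lambda>s. ereal (lap_right V x (b - x) s))"
    by (rule ereal_minus_le_minus[THEN iffD2])
  then show ?thesis
    unfolding lap_right_liminf_ge_def lap_right_minus
    using ereal_Liminf_uminus[of at_top "\<lambda>s. ereal (lap_right V x (b - x) s)"] by simp
qed

lemma laplace_minor_le_major:
  assumes "a \<le> b" "laplace_minor a b f V" "laplace_major a b f U"
  shows "V b - V a \<le> U b - U a"
proof -
  have cont: "continuous_on {a..b} U" "continuous_on {a..b} V"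
    using assms(2,3) unfolding laplace_major_def laplace_minor_def by auto
  have "lap_right_liminf_ge b (\<lambda>y. U y + - V y) x (f x + - f x)" if "x \<in> {a..<b}" for x
    using that laplace_major_lap_right_liminf_ge[OF assms(3)] laplace_minor_lap_right_liminf_ge[OF assms(2)]
    by (intro lap_right_liminf_ge_add[OF cont(1) continuous_on_minus[OF cont(2)]]) auto
  then have "mono_on {a..b} (\<lambda>y. U y + - V y)"
    using cont by (intro lap_right_liminf_nonneg_imp_mono_on continuous_intros) auto
  then show ?thesis
    using mono_onD[of "{a..b}" _ a b] assms(1) by fastforce
qed

lemma laplace_integrable_if_major_minor:
  assumes "a \<le> b" "laplace_major a b f F" "laplace_minor a b f F"
  shows "laplace_integrable a b f" "laplace_integral a b f = F b - F a"
proof -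
  have "laplace_upper_int a b f = ereal (F b - F a)"
  proof (rule antisym)
    show "laplace_upper_int a b f \<le> ereal (F b - F a)"
      unfolding laplace_upper_int_def using assms(2) by (intro INF_lower) auto
    show "ereal (F b - F a) \<le> laplace_upper_int a b f"
      unfolding laplace_upper_int_def using laplace_minor_le_major[OF assms(1,3)]
      by (intro INF_greatest) auto
  qed
  moreover have "laplace_lower_int a b f = ereal (F b - F a)"
  proof (rule antisym)
    show "laplace_lower_int a b f \<le> ereal (F b - F a)"
      unfolding laplace_lower_int_def using laplace_minor_le_major[OF assms(1) _ assms(2)]
      by (intro SUP_least) auto
    show "ereal (F b - F a) \<le> laplace_lower_int a b f"
      unfolding laplace_lower_int_def using assms(3) by (intro SUP_upper) auto
  qed
  ultimately show "laplace_integrable a b f" "laplace_integral a b f = F b - F a"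
    unfolding laplace_integrable_def laplace_integral_def by simp_all
qed

lemma laplace_integrable_ereal_integrals:
  assumes "laplace_integrable a b k"
  shows "laplace_upper_int a b k = ereal (laplace_integral a b k)"
    and "laplace_lower_int a b k = ereal (laplace_integral a b k)"
  using assms unfolding laplace_integrable_def laplace_integral_def by (auto simp: ereal_real)

lemma laplace_integrable_obtains_major:
  assumes "laplace_integrable a b k" "e > 0"
  obtains U where "laplace_major a b k U" "U b - U a < laplace_integral a b k + e"
proof -
  have "laplace_upper_int a b k < ereal (laplace_integral a b k + e)"
    using laplace_integrable_ereal_integrals(1)[OF assms(1)] assms(2) by simp
  then show thesis
    using that unfolding laplace_upper_int_def INF_less_iff by auto
qed

lemma laplace_integrable_obtains_minor:
  assumes "laplace_integrable a b k" "e > 0"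
  obtains V where "laplace_minor a b k V" "laplace_integral a b k - e < V b - V a"
proof -
  have "ereal (laplace_integral a b k - e) < laplace_lower_int a b k"
    using laplace_integrable_ereal_integrals(2)[OF assms(1)] assms(2) by simp
  then show thesis
    using that unfolding laplace_lower_int_def less_SUP_iff by auto
qed

lemma laplace_integrable_signed_right_major:
  assumes "laplace_integrable a b k" "e > 0" "\<sigma> = 1 \<or> \<sigma> = - 1"
  obtains W where "continuous_on {a..b} W"
    and "\<forall>x\<in>{a..<b}. lap_right_liminf_ge b W x (\<sigma> * k x)"
    and "W b - W a < \<sigma> * laplace_integral a b k + e"
  using assms(3)
proof
  assume "\<sigma> = 1"
  obtain U where U: "laplace_major a b k U" "U b - U a < laplace_integral a b k + e"
    using laplace_integrable_obtains_major[OF assms(1,2)] by blast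
  then show thesis
    using that[of U] \<open>\<sigma> = 1\<close> laplace_major_lap_right_liminf_ge[OF U(1)]
    unfolding laplace_major_def by auto
next
  assume "\<sigma> = - 1"
  obtain V where V: "laplace_minor a b k V" "laplace_integral a b k - e < V b - V a"
    using laplace_integrable_obtains_minor[OF assms(1,2)] by blast
  then show thesis
    using that[of "\<lambda>y. - V y"] \<open>\<sigma> = - 1\<close> laplace_minor_lap_right_liminf_ge[OF V(1)]
    unfolding laplace_minor_def by (auto intro: continuous_intros)
qed

lemma laplace_integrable_scaled_right_major:
  assumes "laplace_integrable a b k" "e > 0"
  obtains U where "continuous_on {a..b} U"
    and "\<forall>x\<in>{a..<b}. lap_right_liminf_ge b U x (c * k x)"
    and "U b - U a < c * laplace_integral a b k + e"
proof -
  define \<sigma> :: real where "\<sigma> = (if c \<ge> 0 then 1 else - 1)"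
  have c: "c * r = \<bar>c\<bar> * (\<sigma> * r)" for r
    by (simp add: \<sigma>_def)
  define e' where "e' = e / (\<bar>c\<bar> + 1)"
  have "e' > 0" "\<bar>c\<bar> * e' < e"
    using assms(2) by (auto simp: e'_def field_simps)
  have "\<sigma> = 1 \<or> \<sigma> = - 1"
    by (simp add: \<sigma>_def)
  then obtain W where W: "continuous_on {a..b} W" "\<forall>x\<in>{a..<b}. lap_right_liminf_ge b W x (\<sigma> * k x)"
    "W b - W a < \<sigma> * laplace_integral a b k + e'"
    by (rule laplace_integrable_signed_right_major[OF assms(1) \<open>e' > 0\<close>])
  show thesis
  proof
    show "continuous_on {a..b} (\<lambda>y. \<bar>c\<bar> * W y)"
      using W(1) by (intro continuous_intros)
    show "\<forall>x\<in>{a..<b}. lap_right_liminf_ge b (\<lambda>y. \<bar>c\<bar> * W y) x (c * k x)"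
      unfolding c using W(2) by (auto intro: lap_right_liminf_ge_cmult)
    have "\<bar>c\<bar> * (W b - W a) \<le> \<bar>c\<bar> * (\<sigma> * laplace_integral a b k + e')"
      using W(3) by (intro mult_left_mono) auto
    then show "\<bar>c\<bar> * W b - \<bar>c\<bar> * W a < c * laplace_integral a b k + e"
      unfolding c using \<open>\<bar>c\<bar> * e' < e\<close> by (simp add: algebra_simps)
  qed
qed

lemma laplace_integral_nonneg:
  assumes "a \<le> b" "laplace_integrable a b k" "\<forall>x\<in>{a..b}. 0 \<le> k x"
  shows "0 \<le> laplace_integral a b k"
proof (rule field_le_epsilon)
  fix e :: real assume "e > 0"
  then obtain U where U: "continuous_on {a..b} U" "\<forall>x\<in>{a..<b}. lap_right_liminf_ge b U x (1 * k x)"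
    "U b - U a < 1 * laplace_integral a b k + e"
    by (rule laplace_integrable_scaled_right_major[OF assms(2)])
  have "mono_on {a..b} U"
    using U(2) assms(3) by (intro lap_right_liminf_nonneg_imp_mono_on[OF U(1)])
      (auto intro: lap_right_liminf_ge_mono)
  then show "0 \<le> laplace_integral a b k + e"
    using U(3) mono_onD[of "{a..b}" U a b] assms(1) by fastforce
qed

section \<open>Null functions\<close>

lemma continuous_on_suminf_dominated:
  fixes u :: "nat \<Rightarrow> real \<Rightarrow> real"
  assumes cont: "\<And>j. continuous_on S (u j)"
    and bound: "\<And>j x. x \<in> S \<Longrightarrow> \<bar>u j x\<bar> \<le> \<epsilon> j" and "summable \<epsilon>"
  shows "continuous_on S (\<lambda>x. \<Sum>j. u j x)"
proof -
  have lim: "uniform_limit S (\<lambda>n x. \<Sum>j<n. u j x) (\<lambda>x. \<Sum>j. u j x) sequentially"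
    using bound by (intro Weierstrass_m_test[OF _ \<open>summable \<epsilon>\<close>]) auto
  have "\<forall>\<^sub>F n in sequentially. continuous_on S (\<lambda>x. \<Sum>j<n. u j x)"
    by (intro always_eventually allI continuous_on_sum cont)
  then show ?thesis
    by (rule uniform_limit_theorem[OF _ lim trivial_limit_sequentially])
qed

lemma sum_diff_le_suminf_diff:
  fixes u :: "nat \<Rightarrow> real"
  assumes "\<And>j. u j \<le> v j" "summable u" "summable v"
  shows "(\<Sum>j<N. v j) - (\<Sum>j<N. u j) \<le> (\<Sum>j. v j) - (\<Sum>j. u j)"
proof -
  have "(\<Sum>j<N. v j) - (\<Sum>j<N. u j) = (\<Sum>j<N. v j - u j)"
    by (simp add: sum_subtractf)
  also have "\<dots> \<le> (\<Sum>j. v j - u j)"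
    using assms by (intro sum_le_suminf summable_diff) auto
  also have "\<dots> = (\<Sum>j. v j) - (\<Sum>j. u j)"
    using assms by (intro suminf_diff[symmetric])
  finally show ?thesis .
qed

lemma lap_right_liminf_ge_suminf:
  fixes u :: "nat \<Rightarrow> real \<Rightarrow> real"
  assumes cont: "\<And>j. continuous_on {a..b} (u j)" and mono: "\<And>j. mono_on {a..b} (u j)"
    and bound: "\<And>j x. x \<in> {a..b} \<Longrightarrow> \<bar>u j x\<bar> \<le> \<epsilon> j" and "summable \<epsilon>"
    and x: "x \<in> {a..b}" and ge: "\<And>j. lap_right_liminf_ge b (u j) x q" and "q > 0"
  shows "lap_right_liminf_ge b (\<lambda>y. \<Sum>j. u j y) x p"
proof -
  obtain N :: nat where N: "p < real N * q"
    using reals_Archimedean3[OF \<open>q > 0\<close>] by blast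
  have summable: "summable (\<lambda>j. u j y)" if "y \<in> {a..b}" for y
    using bound that by (intro summable_comparison_test'[OF \<open>summable \<epsilon>\<close>]) auto
  have "continuous_on {a..b} (\<lambda>y. \<Sum>j. u j y)"
    using cont bound \<open>summable \<epsilon>\<close> by (rule continuous_on_suminf_dominated)
  then have "lap_right (\<lambda>y. \<Sum>j<N. u j y) x (b - x) s \<le> lap_right (\<lambda>y. \<Sum>j. u j y) x (b - x) s" for s
  proof (rule lap_right_mono[OF _ continuous_on_sum[OF cont] x])
    fix t assume "t \<in> {0..b - x}"
    then show "(\<Sum>j<N. u j (x + t)) - (\<Sum>j<N. u j x) \<le> (\<Sum>j. u j (x + t)) - (\<Sum>j. u j x)"
      using x by (intro sum_diff_le_suminf_diff summable mono_onD[OF mono]) auto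
  qed
  moreover have "lap_right_liminf_ge b (\<lambda>y. \<Sum>j<N. u j y) x (\<Sum>j<N. q)"
    using x cont ge by (intro lap_right_liminf_ge_sum) auto
  ultimately have "lap_right_liminf_ge b (\<lambda>y. \<Sum>j. u j y) x (\<Sum>j<N. q)"
    by (rule lap_right_liminf_ge_le_trans)
  then show ?thesis
    using N by (auto intro: lap_right_liminf_ge_mono)
qed

definition laplace_null :: "real \<Rightarrow> real \<Rightarrow> (real \<Rightarrow> real) \<Rightarrow> bool" where
  "laplace_null a b h \<longleftrightarrow> (\<forall>e>0. \<exists>U. continuous_on {a..b} U
     \<and> (\<forall>x\<in>{a..<b}. lap_right_liminf_ge b U x (h x)) \<and> U b - U a < e)"

lemma laplace_null_lincomb:
  assumes "laplace_integrable a b k" "laplace_integrable a b l"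
    and "\<alpha> * laplace_integral a b k + \<beta> * laplace_integral a b l \<le> 0"
  shows "laplace_null a b (\<lambda>x. \<alpha> * k x + \<beta> * l x)"
  unfolding laplace_null_def
proof (intro allI impI)
  fix e :: real assume "e > 0"
  then have "e / 2 > 0" by simp
  obtain U where U: "continuous_on {a..b} U" "\<forall>x\<in>{a..<b}. lap_right_liminf_ge b U x (\<alpha> * k x)"
    "U b - U a < \<alpha> * laplace_integral a b k + e / 2"
    by (rule laplace_integrable_scaled_right_major[OF assms(1) \<open>e / 2 > 0\<close>])
  obtain V where V: "continuous_on {a..b} V" "\<forall>x\<in>{a..<b}. lap_right_liminf_ge b V x (\<beta> * l x)"
    "V b - V a < \<beta> * laplace_integral a b l + e / 2"
    by (rule laplace_integrable_scaled_right_major[OF assms(2) \<open>e / 2 > 0\<close>])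
  show "\<exists>W. continuous_on {a..b} W \<and> (\<forall>x\<in>{a..<b}. lap_right_liminf_ge b W x (\<alpha> * k x + \<beta> * l x))
      \<and> W b - W a < e"
  proof (intro exI conjI ballI)
    show "continuous_on {a..b} (\<lambda>y. U y + V y)"
      using U(1) V(1) by (rule continuous_on_add)
    show "lap_right_liminf_ge b (\<lambda>y. U y + V y) x (\<alpha> * k x + \<beta> * l x)" if "x \<in> {a..<b}" for x
      using that U(2) V(2) by (intro lap_right_liminf_ge_add[OF U(1) V(1)]) auto
    show "U b + V b - (U a + V a) < e"
      using U(3) V(3) assms(3) by linarith
  qed
qed

lemma laplace_null_obtains_small_majors:
  fixes \<epsilon> :: "nat \<Rightarrow> real"
  assumes h: "\<forall>x\<in>{a..b}. 0 \<le> h x" and null: "laplace_null a b h" and "\<And>j. \<epsilon> j > 0"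
  obtains u where "\<And>j. continuous_on {a..b} (u j)" "\<And>j. mono_on {a..b} (u j)"
    and "\<And>j x. x \<in> {a..b} \<Longrightarrow> 0 \<le> u j x \<and> u j x \<le> \<epsilon> j"
    and "\<And>j x. x \<in> {a..<b} \<Longrightarrow> lap_right_liminf_ge b (u j) x (h x)" and "\<And>j. u j a = 0"
proof -
  have "\<forall>j. \<exists>U. continuous_on {a..b} U \<and> (\<forall>x\<in>{a..<b}. lap_right_liminf_ge b U x (h x))
      \<and> U b - U a < \<epsilon> j"
    using null assms(3) unfolding laplace_null_def by blast
  from choice[OF this] obtain U where U_cont: "\<And>j. continuous_on {a..b} (U j)"
    and U_ge: "\<And>j x. x \<in> {a..<b} \<Longrightarrow> lap_right_liminf_ge b (U j) x (h x)"
    and U_incr: "\<And>j. U j b - U j a < \<epsilon> j"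
    by blast
  have U_mono: "mono_on {a..b} (U j)" for j
  proof (rule lap_right_liminf_nonneg_imp_mono_on[OF U_cont], rule ballI)
    fix x assume x: "x \<in> {a..<b}"
    have "0 \<le> h x"
      using h x by simp
    with U_ge[OF x] show "lap_right_liminf_ge b (U j) x 0"
      by (rule lap_right_liminf_ge_mono)
  qed
  show thesis
  proof
    show "continuous_on {a..b} (\<lambda>y. U j y - U j a)" for j
      by (intro continuous_intros U_cont)
    show "mono_on {a..b} (\<lambda>y. U j y - U j a)" for j
      using mono_onD[OF U_mono] by (intro mono_onI) auto
    show "0 \<le> U j x - U j a \<and> U j x - U j a \<le> \<epsilon> j" if "x \<in> {a..b}" for j x
      using mono_onD[OF U_mono, of a x j] mono_onD[OF U_mono, of x b j] U_incr[of j] that by auto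
    show "lap_right_liminf_ge b (\<lambda>y. U j y - U j a) x (h x)" if "x \<in> {a..<b}" for j x
      using U_ge[OF that] by (simp add: lap_right_liminf_ge_def lap_right_def)
  qed simp
qed

lemma laplace_null_steep_function:
  assumes "a \<le> b" and h: "\<forall>x\<in>{a..b}. 0 \<le> h x" and null: "laplace_null a b h" and "\<eta> > 0"
  obtains \<Phi> where "continuous_on {a..b} \<Phi>" "mono_on {a..b} \<Phi>" "\<Phi> b - \<Phi> a \<le> \<eta>"
    and "\<And>x p. x \<in> {a..<b} \<Longrightarrow> 0 < h x \<Longrightarrow> lap_right_liminf_ge b \<Phi> x p"
proof -
  define \<epsilon> where "\<epsilon> = (\<lambda>j::nat. \<eta> / 2 * (1 / 2) ^ j)"
  have "\<epsilon> sums \<eta>"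
    using sums_mult[OF geometric_sums[of "1 / 2 :: real"], of "\<eta> / 2"] by (simp add: \<epsilon>_def)
  then have "summable \<epsilon>" "(\<Sum>j. \<epsilon> j) = \<eta>"
    by (auto simp: sums_iff)
  obtain u where u_cont: "\<And>j. continuous_on {a..b} (u j)" and u_mono: "\<And>j. mono_on {a..b} (u j)"
    and u_bound: "\<And>j x. x \<in> {a..b} \<Longrightarrow> 0 \<le> u j x \<and> u j x \<le> \<epsilon> j"
    and u_ge: "\<And>j x. x \<in> {a..<b} \<Longrightarrow> lap_right_liminf_ge b (u j) x (h x)"
    and u_a: "\<And>j. u j a = 0"
    using laplace_null_obtains_small_majors[OF h null, of \<epsilon>] \<open>\<eta> > 0\<close> unfolding \<epsilon>_def by auto
  have abs_bound: "\<bar>u j x\<bar> \<le> \<epsilon> j" if "x \<in> {a..b}" for j x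
    using u_bound[OF that] by simp
  have summable: "summable (\<lambda>j. u j x)" if "x \<in> {a..b}" for x
    using abs_bound that by (intro summable_comparison_test'[OF \<open>summable \<epsilon>\<close>]) auto
  show thesis
  proof
    show "continuous_on {a..b} (\<lambda>x. \<Sum>j. u j x)"
      using u_cont abs_bound \<open>summable \<epsilon>\<close> by (rule continuous_on_suminf_dominated)
    show "mono_on {a..b} (\<lambda>x. \<Sum>j. u j x)"
      using summable by (intro mono_onI suminf_le mono_onD[OF u_mono]) auto
    have "(\<Sum>j. u j b) \<le> (\<Sum>j. \<epsilon> j)"
      using u_bound summable \<open>a \<le> b\<close> \<open>summable \<epsilon>\<close> by (intro suminf_le) auto
    then show "(\<Sum>j. u j b) - (\<Sum>j. u j a) \<le> \<eta>"
      using \<open>(\<Sum>j. \<epsilon> j) = \<eta>\<close> by (simp add: u_a)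
    show "lap_right_liminf_ge b (\<lambda>x. \<Sum>j. u j x) x p" if "x \<in> {a..<b}" "0 < h x" for x p
      using that u_ge
      by (intro lap_right_liminf_ge_suminf[OF u_cont u_mono abs_bound \<open>summable \<epsilon>\<close>, of _ "h x"]) auto
  qed
qed

lemma laplace_null_exceptional_mono:
  assumes "a \<le> b" "\<forall>x\<in>{a..b}. 0 \<le> h x" "laplace_null a b h" and W: "continuous_on {a..b} W"
    and zero: "\<forall>x\<in>{a..<b}. h x = 0 \<longrightarrow> lap_right_liminf_ge b W x 0"
    and finite: "\<forall>x\<in>{a..<b}. \<exists>C. lap_right_liminf_ge b W x C"
  shows "W a \<le> W b"
proof (rule field_le_epsilon)
  fix \<eta> :: real assume "\<eta> > 0"
  then obtain \<Phi> where \<Phi>: "continuous_on {a..b} \<Phi>" "mono_on {a..b} \<Phi>" "\<Phi> b - \<Phi> a \<le> \<eta>"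
    "\<And>x p. x \<in> {a..<b} \<Longrightarrow> 0 < h x \<Longrightarrow> lap_right_liminf_ge b \<Phi> x p"
    using laplace_null_steep_function[OF assms(1-3)] by blast
  have "lap_right_liminf_ge b (\<lambda>y. \<Phi> y + W y) x 0" if x: "x \<in> {a..<b}" for x
  proof (cases "h x = 0")
    case True
    have "lap_right_liminf_ge b (\<lambda>y. \<Phi> y + W y) x (0 + 0)"
      using x True zero
      by (intro lap_right_liminf_ge_add[OF \<Phi>(1) W] mono_on_imp_lap_right_liminf_ge_0[OF \<Phi>(1,2)]) auto
    then show ?thesis
      by simp
  next
    case False
    then have "0 < h x"
      using assms(2) x by force
    obtain C where "lap_right_liminf_ge b W x C"
      using finite x by blast
    then have "lap_right_liminf_ge b (\<lambda>y. \<Phi> y + W y) x (- C + C)"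
      using x by (intro lap_right_liminf_ge_add[OF \<Phi>(1) W] \<Phi>(4) \<open>0 < h x\<close>) auto
    then show ?thesis
      by simp
  qed
  then have "mono_on {a..b} (\<lambda>y. \<Phi> y + W y)"
    by (intro lap_right_liminf_nonneg_imp_mono_on continuous_on_add \<Phi>(1) W) auto
  then have "\<Phi> a + W a \<le> \<Phi> b + W b"
    using mono_onD[of "{a..b}" _ a b] \<open>a \<le> b\<close> by simp
  then show "W a \<le> W b + \<eta>"
    using \<Phi>(3) by linarith
qed

lemma laplace_integral_eq_0_if_null:
  assumes "a \<le> b" "\<forall>x\<in>{a..b}. 0 \<le> h x" "laplace_null a b h" "laplace_integrable a b k"
    and "\<forall>x\<in>{a..<b}. h x = 0 \<longrightarrow> k x = 0"
  shows "laplace_integral a b k = 0"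
proof -
  have "0 \<le> c * laplace_integral a b k" for c
  proof (rule field_le_epsilon)
    fix e :: real assume "e > 0"
    then obtain U where U: "continuous_on {a..b} U" "\<forall>x\<in>{a..<b}. lap_right_liminf_ge b U x (c * k x)"
      "U b - U a < c * laplace_integral a b k + e"
      by (rule laplace_integrable_scaled_right_major[OF assms(4)])
    have "U a \<le> U b"
      using U(2) assms(5) by (intro laplace_null_exceptional_mono[OF assms(1-3) U(1)]) auto
    then show "0 \<le> c * laplace_integral a b k + e"
      using U(3) by linarith
  qed
  from this[of 1] this[of "- 1"] show ?thesis
    by simp
qed

section \<open>The mean value theorem\<close>

lemma darboux_on_intermediate_value:
  assumes "darboux_on {a..b} f" "x1 \<in> {a..b}" "x2 \<in> {a..b}" "f x1 \<le> c" "c \<le> f x2"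
  shows "\<exists>z\<in>{a..b}. f z = c"
proof (cases "x1 \<le> x2")
  case True
  with assms obtain z where "z \<in> {x1..x2}" "f z = c"
    unfolding darboux_on_def by (meson min.coboundedI1 max.coboundedI2)
  with assms show ?thesis
    by auto
next
  case False
  with assms obtain z where "z \<in> {x2..x1}" "f z = c"
    unfolding darboux_on_def by (meson min.coboundedI2 max.coboundedI1 nle_le)
  with assms show ?thesis
    by auto
qed

lemma laplace_integral_weight_eq_0:
  assumes "a \<le> b" "laplace_integrable a b g" "\<forall>x\<in>{a..b}. 0 \<le> g x"
    and "laplace_integrable a b (\<lambda>x. f x * g x)"
    and "laplace_integral a b (\<lambda>x. f x * g x) = c * laplace_integral a b g"
    and sign: "\<forall>x\<in>{a..b}. 0 < \<sigma> * (f x - c)"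
  shows "laplace_integral a b g = 0"
proof -
  define h where "h x = \<sigma> * (f x - c) * g x" for x
  have "laplace_null a b (\<lambda>x. \<sigma> * (f x * g x) + (- \<sigma> * c) * g x)"
    using assms(5) by (intro laplace_null_lincomb[OF assms(4,2)]) simp
  moreover have "(\<lambda>x. \<sigma> * (f x * g x) + (- \<sigma> * c) * g x) = h"
    by (auto simp: h_def algebra_simps)
  ultimately have "laplace_null a b h"
    by simp
  moreover have "\<forall>x\<in>{a..b}. 0 \<le> h x"
  proof
    fix x assume "x \<in> {a..b}"
    then have "0 \<le> \<sigma> * (f x - c)" "0 \<le> g x"
      using sign assms(3) by (auto intro: less_imp_le)
    then show "0 \<le> h x"
      by (simp add: h_def)
  qed
  moreover have "\<forall>x\<in>{a..<b}. h x = 0 \<longrightarrow> g x = 0"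
  proof (intro ballI impI)
    fix x assume "x \<in> {a..<b}" "h x = 0"
    moreover have "\<sigma> * (f x - c) \<noteq> 0"
      using sign \<open>x \<in> {a..<b}\<close> by force
    ultimately show "g x = 0"
      by (simp add: h_def)
  qed
  ultimately show ?thesis
    by (intro laplace_integral_eq_0_if_null[OF assms(1) _ _ assms(2)])
qed

lemma laplace_mean_value:
  assumes "a \<le> b" "darboux_on {a..b} f" "laplace_integrable a b g" "\<forall>x\<in>{a..b}. 0 \<le> g x"
    and "laplace_integrable a b (\<lambda>x. f x * g x)"
  shows "\<exists>\<xi>\<in>{a..b}. laplace_integral a b (\<lambda>x. f x * g x) = f \<xi> * laplace_integral a b g"
proof -
  define I where "I = laplace_integral a b (\<lambda>x. f x * g x)"
  define J where "J = laplace_integral a b g"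
  show ?thesis
  proof (cases "J = 0")
    case True
    have "laplace_null a b (\<lambda>x. 1 * g x + 0 * g x)"
      using True by (intro laplace_null_lincomb[OF assms(3,3)]) (simp add: J_def)
    then have "I = 0"
      unfolding I_def using assms by (intro laplace_integral_eq_0_if_null[of a b g]) auto
    then show ?thesis
      using True assms(1) unfolding I_def J_def by force
  next
    case False
    with laplace_integral_nonneg[OF assms(1,3,4)] have "J > 0"
      by (simp add: J_def)
    define c where "c = I / J"
    have I: "I = c * J"
      using \<open>J > 0\<close> by (simp add: c_def)
    have "\<exists>x\<in>{a..b}. \<sigma> * (f x - c) \<le> 0" if "\<sigma> \<in> {1, - 1}" for \<sigma> :: real
    proof (rule ccontr)
      assume "\<not> ?thesis"
      then have "\<forall>x\<in>{a..b}. 0 < \<sigma> * (f x - c)"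
        by (auto simp: not_le)
      then have "J = 0"
        using laplace_integral_weight_eq_0[OF assms(1,3,4,5)] I unfolding I_def J_def by blast
      with \<open>J > 0\<close> show False
        by simp
    qed
    from this[of 1] this[of "- 1"] obtain x1 x2 where "x1 \<in> {a..b}" "f x1 \<le> c" "x2 \<in> {a..b}" "c \<le> f x2"
      by auto
    then obtain \<xi> where "\<xi> \<in> {a..b}" "f \<xi> = c"
      using darboux_on_intermediate_value[OF assms(2)] by blast
    then show ?thesis
      using I unfolding I_def J_def by auto
  qed
qed

lemma lower_upper_LD_id:
  assumes "a < b" "x \<in> {a..b}"
  shows "lower_LD a b (\<lambda>y. y) x = 1" "upper_LD a b (\<lambda>y. y) x = 1"
  using assms by (auto simp: lower_LD_def upper_LD_def lap_left_id Liminf_Limsup_lap_right_id)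

lemma laplace_integral_one:
  assumes "a < b"
  shows "laplace_integrable a b (\<lambda>x. 1)" "laplace_integral a b (\<lambda>x. 1) = b - a"
proof -
  have "laplace_major a b (\<lambda>x. 1) (\<lambda>y. y)" "laplace_minor a b (\<lambda>x. 1) (\<lambda>y. y)"
    unfolding laplace_major_def laplace_minor_def using lower_upper_LD_id[OF assms] by auto
  then show "laplace_integrable a b (\<lambda>x. 1)" "laplace_integral a b (\<lambda>x. 1) = b - a"
    using laplace_integrable_if_major_minor[of a b] assms by auto
qed

theorem theorem8p1:
  fixes f g :: "real \<Rightarrow> real" and a b :: real
  assumes "a < b"
    and "laplace_integrable a b f"
    and "darboux_on {a..b} f"
    and "laplace_integrable a b g"
    and "\<forall>x\<in>{a..b}. g x \<ge> 0"
    and "laplace_integrable a b (\<lambda>x. f x * g x)"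
  shows "(\<exists>\<xi>\<in>{a..b}. laplace_integral a b (\<lambda>x. f x * g x) = f \<xi> * laplace_integral a b g)
       \<and> (\<exists>\<xi>\<in>{a..b}. laplace_integral a b f = f \<xi> * (b - a))"
proof
  show "\<exists>\<xi>\<in>{a..b}. laplace_integral a b (\<lambda>x. f x * g x) = f \<xi> * laplace_integral a b g"
    using assms by (intro laplace_mean_value) auto
  have "\<exists>\<xi>\<in>{a..b}. laplace_integral a b (\<lambda>x. f x * 1) = f \<xi> * laplace_integral a b (\<lambda>x. 1)"
    using assms laplace_integral_one[OF assms(1)] by (intro laplace_mean_value) auto
  then show "\<exists>\<xi>\<in>{a..b}. laplace_integral a b f = f \<xi> * (b - a)"
    using laplace_integral_one[OF assms(1)] by simp
qed

end
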